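(* Let $H\in\mathbb{R}^{n\times n}$ be symmetric positive definite with LDL decomposition $H=(\grave U+I)D(\grave U+I)^T$ ($\grave U$ strictly upper triangular, $D$ diagonal). Let $w\in\mathbb{R}^{1\times n}$ and let $\mathcal{Q}:\mathbb{R}\to\mathbb{R}$ be any rounding map, for example nearest rounding to a finite grid with clamping. Run the OPTQ procedure on $w$. Then for each $t=1,\dots,n$ the value produced by OPTQ is $$\hat w_t=\mathcal{Q}\big(w_t+(w-\hat w)\grave U e_t\big)=\mathcal{Q}\big(w_t-(\hat w_{1:(t-1)}-w_{1:(t-1)})\grave U_{1:(t-1),t}\big).$$ Thus OPTQ coincides with adaptive rounding with linear feedback using $U=\grave U$ (i.e. LDLQ).
   Context: OPTQ procedure: quantize the entries of the row vector $w$ in the order $t=1,\dots,n$. At step $t$, with $\hat w_1,\dots,\hat w_{t-1}$ already fixed, set $\Delta_{1:(t-1)}=\hat w_{1:(t-1)}-w_{1:(t-1)}$. Let $\Delta^*_{t:n}\in\mathbb{R}^{1\times(n-t+1)}$ minimize the proxy loss $\Delta H\Delta^T$ over $\Delta_{t:n}$, where $\Delta=(\Delta_{1:(t-1)},\Delta_{t:n})$. Explicitly, $\Delta^*_{t:n}=-\Delta_{1:(t-1)}H_{1:(t-1),t:n}(H_{t:n,t:n})^{-1}$. Then set $\hat w_t=\mathcal{Q}(w_t+(\Delta^*_{t:n})_1)$, where $(\cdot)_1$ is the first entry. $e_t$ is the $t$-th standard basis vector. Subscript ranges denote submatrices and subvectors. *)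

theory Defs
  imports "Jordan_Normal_Form.Matrix" "Jordan_Normal_Form.Gauss_Jordan_Elimination"
begin

(* Indices are 0-based: entries 0..n-1 correspond to 1..n of the paper. *)

definition sym_pos_def_mat :: "real mat \<Rightarrow> nat \<Rightarrow> bool" where
  "sym_pos_def_mat H n \<longleftrightarrow> H \<in> carrier_mat n n \<and> transpose_mat H = H \<and>
     (\<forall>x \<in> carrier_vec n. x \<noteq> 0\<^sub>v n \<longrightarrow> x \<bullet> (H *\<^sub>v x) > 0)"

definition strictly_upper_triangular :: "real mat \<Rightarrow> bool" where
  "strictly_upper_triangular U \<longleftrightarrow>
     (\<forall>i < dim_row U. \<forall>j < dim_col U. j \<le> i \<longrightarrow> U $$ (i, j) = 0)"

text \<open>Optimal continuation Delta*_{t:n} (a 1 x (n-t) row matrix) at step t (0-based),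
  given the already quantized prefix p = [hat w_0, ..., hat w_{t-1}]:
  Delta*_{t:n} = - Delta_{0:t} H_{0:t, t:n} (H_{t:n,t:n})^{-1}.\<close>
definition optq_delta :: "real mat \<Rightarrow> real vec \<Rightarrow> real list \<Rightarrow> nat \<Rightarrow> real mat" where
  "optq_delta H w p t =
     (let n = dim_row H;
          Dl = mat 1 t (\<lambda>(_, j). p ! j - w $ j);
          B = mat t (n - t) (\<lambda>(i, j). H $$ (i, t + j));
          C = mat (n - t) (n - t) (\<lambda>(i, j). H $$ (t + i, t + j))
      in - (Dl * B * the (mat_inverse C)))"

fun optq :: "real mat \<Rightarrow> (real \<Rightarrow> real) \<Rightarrow> real vec \<Rightarrow> nat \<Rightarrow> real list" where
  "optq H Q w 0 = []"
| "optq H Q w (Suc t) =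
     (let p = optq H Q w t in p @ [Q (w $ t + optq_delta H w p t $$ (0, 0))])"

end

theory Submission imports Defs "Jordan_Normal_Form.Determinant" begin

text \<open>The first entry of the optimal continuation at step \<open>t\<close> is
  \<open>-\<Delta>\<^bsub>0:t\<^esub> H\<^bsub>0:t,t:n\<^esub> x\<close>, where \<open>C x = e\<^sub>0\<close> for the trailing block \<open>C = H\<^bsub>t:n,t:n\<^esub>\<close> (invertible
  by positive definiteness). Write \<open>H = L D L\<^sup>T\<close> with \<open>L = U + 1\<close> upper unitriangular and let
  \<open>\<tilde>x\<close> be \<open>x\<close> padded by \<open>t\<close> leading zeros. Then \<open>g = D L\<^sup>T \<tilde>x\<close> vanishes on the first \<open>t\<close>
  coordinates, so the trailing rows of \<open>H \<tilde>x = L g\<close> form a unitriangular system with right-hand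
  side \<open>e\<^sub>0\<close>; hence \<open>g = e\<^sub>t\<close> and \<open>H \<tilde>x\<close> is the \<open>t\<close>-th column of \<open>L\<close>. Its first \<open>t\<close> rows give
  \<open>H\<^bsub>0:t,t:n\<^esub> x = U\<^bsub>0:t,t\<^esub>\<close>, the LDLQ feedback.\<close>

lemma sum_lessThan_split_shift:
  fixes t n :: nat
  assumes "t \<le> n"
  shows "(\<Sum>b<n. f b) = (\<Sum>b<t. f b) + (\<Sum>j<n - t. f (t + j))"
proof -
  from assms have "(\<Sum>b<n. f b) = (\<Sum>b<t. f b) + (\<Sum>b\<in>{t..<n}. f b)"
    using sum.atLeastLessThan_concat[of 0 t n f] by (simp add: atLeast0LessThan)
  also have "(\<Sum>b\<in>{t..<n}. f b) = (\<Sum>j<n - t. f (t + j))"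
    using \<open>t \<le> n\<close> sum.shift_bounds_nat_ivl[of f 0 t "n - t"]
    by (simp add: lessThan_atLeast0 add.commute)
  finally show ?thesis .
qed

lemma index_mult_diagonal_mult_transpose:
  fixes L D :: "'a::comm_ring_1 mat"
  assumes L: "L \<in> carrier_mat n n" and D: "D \<in> carrier_mat n n" and "diagonal_mat D"
    and a: "a < n" and b: "b < n"
  shows "(L * D * transpose_mat L) $$ (a, b) = (\<Sum>k<n. L $$ (a, k) * D $$ (k, k) * L $$ (b, k))"
proof -
  have LD: "(L * D) $$ (a, k) = L $$ (a, k) * D $$ (k, k)" if k: "k < n" for k
  proof -
    have "(L * D) $$ (a, k) = (\<Sum>l\<in>{0..<n}. L $$ (a, l) * D $$ (l, k))"
      using L D a k by (simp add: scalar_prod_def)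
    also have "\<dots> = (\<Sum>l\<in>{0..<n}. if l = k then L $$ (a, l) * D $$ (l, k) else 0)"
      using D k \<open>diagonal_mat D\<close> unfolding diagonal_mat_def by (intro sum.cong) auto
    finally show ?thesis using k by simp
  qed
  have "(L * D * transpose_mat L) $$ (a, b) = row (L * D) a \<bullet> col (transpose_mat L) b"
    using L D a b by (intro index_mult_mat(1)) auto
  also have "\<dots> = (\<Sum>k\<in>{0..<n}. (L * D) $$ (a, k) * L $$ (b, k))"
    unfolding scalar_prod_def using L D a b by (intro sum.cong) auto
  finally have "(L * D * transpose_mat L) $$ (a, b) = (\<Sum>k\<in>{0..<n}. (L * D) $$ (a, k) * L $$ (b, k))" .
  then show ?thesis by (simp add: LD atLeast0LessThan)
qed

lemma pos_def_trailing_block_det_nonzero: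
  assumes H: "sym_pos_def_mat H n" and t: "t \<le> n"
  shows "det (mat (n - t) (n - t) (\<lambda>(i, j). H $$ (t + i, t + j))) \<noteq> 0"
proof
  define m where "m = n - t"
  define C where "C = mat m m (\<lambda>(i, j). H $$ (t + i, t + j))"
  have Hc: "H \<in> carrier_mat n n" using H unfolding sym_pos_def_mat_def by auto
  assume "det (mat (n - t) (n - t) (\<lambda>(i, j). H $$ (t + i, t + j))) = 0"
  then obtain v where v: "v \<in> carrier_vec m" "v \<noteq> 0\<^sub>v m" "C *\<^sub>v v = 0\<^sub>v m"
    using det_0_iff_vec_prod_zero_field[of C m] unfolding C_def m_def by auto
  define x where "x = vec n (\<lambda>i. if i < t then 0 else v $ (i - t))"
  have x_shift: "x $ (t + j) = v $ j" if "j < m" for j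
    using that unfolding x_def m_def by simp
  have "x \<noteq> 0\<^sub>v n"
  proof
    assume "x = 0\<^sub>v n"
    then have "v = 0\<^sub>v m"
      using v(1) x_shift by (intro eq_vecI) (auto simp: m_def)
    with v(2) show False ..
  qed
  moreover have Hx_tail: "(H *\<^sub>v x) $ (t + i) = 0" if i: "i < m" for i
  proof -
    have "(H *\<^sub>v x) $ (t + i) = (\<Sum>b<n. H $$ (t + i, b) * x $ b)"
      using Hc i by (simp add: m_def x_def scalar_prod_def atLeast0LessThan)
    also have "\<dots> = (\<Sum>j<m. C $$ (i, j) * v $ j)"
      using sum_lessThan_split_shift[OF t, of "\<lambda>b. H $$ (t + i, b) * x $ b"] i x_shift
      by (simp add: C_def m_def x_def)
    also have "\<dots> = (C *\<^sub>v v) $ i"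
      using v(1) i by (simp add: C_def scalar_prod_def atLeast0LessThan)
    finally show ?thesis using v(3) i by simp
  qed
  then have "x $ i * (H *\<^sub>v x) $ i = 0" if "i < n" for i
    using that t Hx_tail[of "i - t"] by (cases "i < t") (auto simp: x_def m_def)
  then have "x \<bullet> (H *\<^sub>v x) = 0"
    unfolding scalar_prod_def using Hc by (intro sum.neutral) auto
  ultimately show False
    using H unfolding sym_pos_def_mat_def x_def by fastforce
qed

lemma unitriangular_solve_unit:
  fixes l :: "nat \<Rightarrow> nat \<Rightarrow> 'a::comm_ring_1"
  assumes low: "\<And>i k. i < m \<Longrightarrow> k < i \<Longrightarrow> l i k = 0"
    and diag: "\<And>i. i < m \<Longrightarrow> l i i = 1"
    and sol: "\<And>i. i < m \<Longrightarrow> (\<Sum>k<m. l i k * z k) = (if i = 0 then 1 else 0)"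
    and i: "i < m"
  shows "z i = (if i = 0 then 1 else 0)"
  using i
proof (induction "m - i" arbitrary: i rule: less_induct)
  case (less i)
  have "(\<Sum>k<m. l i k * z k) = (\<Sum>k<m. if k = i then z k else 0)"
  proof (intro sum.cong refl)
    fix k assume k: "k \<in> {..<m}"
    consider "k < i" | "k = i" | "i < k" by linarith
    then show "l i k * z k = (if k = i then z k else 0)"
      by cases (use low diag less k in auto)
  qed
  then show ?case using sol[OF less.prems] less.prems by simp
qed

lemma LDLt_trailing_block_solve:
  fixes h l :: "nat \<Rightarrow> nat \<Rightarrow> 'a::comm_ring_1"
  assumes h: "\<And>a b. a < n \<Longrightarrow> b < n \<Longrightarrow> h a b = (\<Sum>k<n. l a k * d k * l b k)"
    and low: "\<And>i k. i < n \<Longrightarrow> k < i \<Longrightarrow> l i k = 0"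
    and diag: "\<And>i. i < n \<Longrightarrow> l i i = 1"
    and t: "t < n"
    and sol: "\<And>i. i < n - t \<Longrightarrow> (\<Sum>j<n - t. h (t + i) (t + j) * x j) = (if i = 0 then 1 else 0)"
    and a: "a < n"
  shows "(\<Sum>j<n - t. h a (t + j) * x j) = l a t"
proof -
  define m where "m = n - t"
  define g where "g k = d k * (\<Sum>j<m. l (t + j) k * x j)" for k
  have g_head: "g k = 0" if "k < t" for k
    using that t low unfolding g_def m_def by (auto intro!: sum.neutral)
  have expand: "(\<Sum>j<m. h b (t + j) * x j) = (\<Sum>k<m. l b (t + k) * g (t + k))" if "b < n" for b
  proof -
    have "(\<Sum>j<m. h b (t + j) * x j) = (\<Sum>j<m. \<Sum>k<n. l b k * d k * l (t + j) k * x j)"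
      using that by (auto simp: h m_def sum_distrib_right intro!: sum.cong)
    also have "\<dots> = (\<Sum>k<n. l b k * g k)"
      by (subst sum.swap) (auto simp: g_def sum_distrib_left mult.assoc intro!: sum.cong)
    also have "\<dots> = (\<Sum>k<m. l b (t + k) * g (t + k))"
      using sum_lessThan_split_shift[of t n "\<lambda>k. l b k * g k"] t g_head by (simp add: m_def)
    finally show ?thesis .
  qed
  have g_tail: "g (t + k) = (if k = 0 then 1 else 0)" if "k < m" for k
    by (rule unitriangular_solve_unit[where l = "\<lambda>i k. l (t + i) (t + k)" and m = m])
       (use that low diag sol expand in \<open>auto simp: m_def\<close>)
  have "(\<Sum>k<m. l a (t + k) * g (t + k)) = (\<Sum>k<m. if k = 0 then l a t else 0)"
    by (intro sum.cong refl) (simp add: g_tail)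
  then show ?thesis using expand[OF a] t by (simp add: m_def)
qed

lemma optq_delta_LDLt:
  fixes H U D :: "real mat"
  assumes H: "sym_pos_def_mat H n"
    and U: "U \<in> carrier_mat n n" and D: "D \<in> carrier_mat n n"
    and "strictly_upper_triangular U" and "diagonal_mat D"
    and LDL: "H = (U + 1\<^sub>m n) * D * transpose_mat (U + 1\<^sub>m n)"
    and t: "t < n"
  shows "optq_delta H w p t $$ (0, 0) = - (\<Sum>j<t. (p ! j - w $ j) * U $$ (j, t))"
proof -
  define m where "m = n - t"
  define Dl where "Dl = mat 1 t (\<lambda>(_, j). p ! j - w $ j)"
  define B where "B = mat t m (\<lambda>(i, j). H $$ (i, t + j))"
  define C where "C = mat m m (\<lambda>(i, j). H $$ (t + i, t + j))"
  have Hc: "H \<in> carrier_mat n n" using H unfolding sym_pos_def_mat_def by auto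
  have C: "C \<in> carrier_mat m m" by (simp add: C_def)
  have "det C \<noteq> 0"
    using pos_def_trailing_block_det_nonzero[OF H] t by (simp add: C_def m_def)
  then obtain X where X: "mat_inverse C = Some X"
    using mat_inverse(1)[OF C, where b = "()"] det_non_zero_imp_unit[OF C, of "()"]
    by (cases "mat_inverse C") auto
  from mat_inverse(2)[OF C X] have CX: "C * X = 1\<^sub>m m" and Xc: "X \<in> carrier_mat m m" by auto
  have BX: "(B * X) $$ (a, 0) = U $$ (a, t)" if a: "a < t" for a
  proof -
    let ?l = "\<lambda>i k. (U + 1\<^sub>m n) $$ (i, k)"
    have "(\<Sum>j<m. H $$ (a, t + j) * X $$ (j, 0)) = ?l a t"
      unfolding m_def
    proof (rule LDLt_trailing_block_solve[where d = "\<lambda>k. D $$ (k, k)"])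
      show "H $$ (a', b) = (\<Sum>k<n. ?l a' k * D $$ (k, k) * ?l b k)" if "a' < n" "b < n" for a' b
        unfolding LDL using that U D \<open>diagonal_mat D\<close>
        by (intro index_mult_diagonal_mult_transpose) auto
      show "(\<Sum>j<n - t. H $$ (t + i, t + j) * X $$ (j, 0)) = (if i = 0 then 1 else 0)"
        if "i < n - t" for i
        using arg_cong[OF CX, of "\<lambda>M. M $$ (i, 0)"] that t C Xc
        by (simp add: C_def m_def scalar_prod_def atLeast0LessThan)
    qed (use U \<open>strictly_upper_triangular U\<close> t a in
         \<open>auto simp: strictly_upper_triangular_def\<close>)
    then show ?thesis
      using Xc a t by (simp add: B_def m_def scalar_prod_def atLeast0LessThan)
  qed
  have "optq_delta H w p t = - (Dl * B * X)"
    using Hc X unfolding optq_delta_def Let_def Dl_def B_def C_def m_def by simp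
  also have "Dl * B * X = Dl * (B * X)"
    using Xc by (intro assoc_mult_mat) (auto simp: Dl_def B_def)
  finally have "optq_delta H w p t $$ (0, 0) = - (\<Sum>a<t. Dl $$ (0, a) * (B * X) $$ (a, 0))"
    using Xc t by (simp add: m_def Dl_def B_def index_uminus_mat scalar_prod_def atLeast0LessThan)
  also have "\<dots> = - (\<Sum>j<t. (p ! j - w $ j) * U $$ (j, t))"
    by (simp add: Dl_def BX)
  finally show ?thesis .
qed

lemma length_optq [simp]: "length (optq H Q w t) = t"
  by (induction t) (simp_all add: Let_def)

lemma optq_prefix: "t \<le> k \<Longrightarrow> optq H Q w t = take t (optq H Q w k)"
  by (induction k) (auto simp: Let_def le_Suc_eq)

lemma nth_optq:
  assumes "t < k"
  shows "optq H Q w k ! t =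
    Q (w $ t + optq_delta H w (take t (optq H Q w k)) t $$ (0, 0))"
proof -
  have "optq H Q w k ! t = optq H Q w (Suc t) ! t"
    using optq_prefix[of "Suc t" k] assms by simp
  also have "\<dots> = Q (w $ t + optq_delta H w (optq H Q w t) t $$ (0, 0))"
    by (simp add: Let_def nth_append)
  finally show ?thesis using optq_prefix[of t k] assms by simp
qed

lemma scalar_prod_col_strictly_upper:
  assumes "U \<in> carrier_mat n n" "strictly_upper_triangular U" "v \<in> carrier_vec n" "t < n"
  shows "v \<bullet> col U t = (\<Sum>j<t. v $ j * U $$ (j, t))"
proof -
  have "v \<bullet> col U t = (\<Sum>j<n. v $ j * U $$ (j, t))"
    using assms by (simp add: scalar_prod_def atLeast0LessThan)
  also have "\<dots> = (\<Sum>j<t. v $ j * U $$ (j, t))"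
    using sum_lessThan_split_shift[of t n "\<lambda>j. v $ j * U $$ (j, t)"] assms
    unfolding strictly_upper_triangular_def by simp
  finally show ?thesis .
qed

theorem theorem6:
  fixes n :: nat and H U D :: "real mat" and w :: "real vec" and Q :: "real \<Rightarrow> real"
  assumes "sym_pos_def_mat H n"
    and "U \<in> carrier_mat n n" and "D \<in> carrier_mat n n"
    and "strictly_upper_triangular U" and "diagonal_mat D"
    and "H = (U + 1\<^sub>m n) * D * transpose_mat (U + 1\<^sub>m n)"
    and "w \<in> carrier_vec n"
  shows "\<forall>t < n.
     optq H Q w n ! t = Q (w $ t + (w - vec n (\<lambda>j. optq H Q w n ! j)) \<bullet> col U t)
   \<and> optq H Q w n ! t = Q (w $ t - (\<Sum>j<t. (optq H Q w n ! j - w $ j) * U $$ (j, t)))"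
proof (intro allI impI conjI)
  fix t assume t: "t < n"
  have feedback: "optq_delta H w (take t (optq H Q w n)) t $$ (0, 0) =
      - (\<Sum>j<t. (optq H Q w n ! j - w $ j) * U $$ (j, t))"
    using optq_delta_LDLt[OF assms(1-6) t] by simp
  then show sum_form: "optq H Q w n ! t = Q (w $ t - (\<Sum>j<t. (optq H Q w n ! j - w $ j) * U $$ (j, t)))"
    using nth_optq[OF t, of H Q w] by simp
  have "(w - vec n (\<lambda>j. optq H Q w n ! j)) \<bullet> col U t = - (\<Sum>j<t. (optq H Q w n ! j - w $ j) * U $$ (j, t))"
    using scalar_prod_col_strictly_upper[OF assms(2,4) _ t] assms(7) t
    by (simp add: sum_negf[symmetric] algebra_simps)
  with sum_form show "optq H Q w n ! t = Q (w $ t + (w - vec n (\<lambda>j. optq H Q w n ! j)) \<bullet> col U t)"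
    by simp
qed

end
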